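(* Let two realisations of local affine Gaudin models be given, labelled $k\in\{1,2\}$, built on the same $\mathfrak g$, $\mathfrak g_0$, $\mathbb D$ and with the same constant $\ell^\infty\in\mathbb R\setminus\{0\}$. Model $k$ has site set $\Sigma^{(k)}$ (with $\Sigma^{(1)}\cap\Sigma^{(2)}=\emptyset$), multiplicities $m_\alpha$, levels $\ell^\alpha_{[p]}$, positions $z_\alpha$, Takiff currents $\mathcal J^\alpha_{[p]}(x)$ in a Poisson algebra $\mathcal A_k$, twist function $\varphi_k(z)=\sum_{\alpha\in\Sigma^{(k)}}\sum_{p=0}^{m_\alpha-1}\frac{\ell^\alpha_{[p]}}{(z-z_\alpha)^{p+1}}-\ell^\infty$ and Gaudin Lax matrix $\Gamma_k(z,x)=\sum_{\alpha\in\Sigma^{(k)}}\sum_{p=0}^{m_\alpha-1}\frac{\mathcal J^\alpha_{[p]}(x)}{(z-z_\alpha)^{p+1}}$. Let $M_k=\sum_{\alpha\in\Sigma^{(k)}}m_\alpha$, $M=M_1+M_2$, and assume the zeros of $\varphi_1$, labelled $\zeta^{(1)}_i$ ($1\le i\le M_1$), and those of $\varphi_2$, labelled $\zeta^{(2)}_i$ ($M_1<i\le M$), are simple. Let $\epsilon^{(1)}_i$ ($1\le i\le M_1$), $\epsilon^{(2)}_i$ ($M_1<i\le M$) be numbers and $\mathcal H_k=\sum_i\epsilon^{(k)}_i\mathcal Q^{(k)}_i$ with $\mathcal Q^{(k)}_i=-\frac{1}{2\varphi_k'(\zeta^{(k)}_i)}\int_{\mathbb D}dx\,\kappa\big(\Gamma_k(\zeta^{(k)}_i,x),\Gamma_k(\zeta^{(k)}_i,x)\big)$.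 For a real $\gamma\neq0$, consider the coupled model on $\mathcal A_1\otimes\mathcal A_2$ with sites $\Sigma^{(1)}\sqcup\Sigma^{(2)}$, the same multiplicities, levels and currents, the same constant $\ell^\infty$, and positions $w_\alpha=z_\alpha$ for $\alpha\in\Sigma^{(1)}$ and $w_\alpha=z_\alpha+\gamma^{-1}$ for $\alpha\in\Sigma^{(2)}$; its twist function is $\varphi_{1\otimes2,\gamma}(z)=\varphi_1(z)+\varphi_2(z-\gamma^{-1})+\ell^\infty$ and its Gaudin Lax matrix $\Gamma_{1\otimes 2,\gamma}(z,x)=\Gamma_1(z,x)+\Gamma_2(z-\gamma^{-1},x)$. Then: (i) for $\gamma$ small enough, one can order the $M$ zeros $\zeta_i(\gamma)$, $i\in\{1,\dots,M\}$, of $\varphi_{1\otimes2,\gamma}$ in such a way that $\zeta_i(\gamma)$ is canonically associated with $\zeta^{(k)}_i$, where $k=1$ if $i\le M_1$ and $k=2$ if $i>M_1$ (namely $\zeta_i(\gamma)\to\zeta^{(1)}_i$ for $i\le M_1$ and $\zeta_i(\gamma)-\gamma^{-1}\to\zeta^{(2)}_i$ for $i>M_1$ as $\gamma\to0$); moreover, for $\gamma$ small enough these zeros are simple. (ii) If one chooses $\epsilon_i=\epsilon^{(k)}_i$ (with $k$ as in (i)), then the coupled Hamiltonian $\mathcal H_\gamma=\sum_{i=1}^M\epsilon_i\Big(-\frac{1}{2\varphi_{1\otimes2,\gamma}'(\zeta_i(\gamma))}\int_{\mathbb D}dx\,\kappa\big(\Gamma_{1\otimes2,\gamma}(\zeta_i(\gamma),x),\Gamma_{1\otimes2,\gamma}(\zeta_i(\gamma),x)\big)\Big)$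 satisfies $\mathcal H_\gamma\to\mathcal H_1+\mathcal H_2$ as $\gamma\to0$.
   Context: $\mathfrak g$ is a finite-dimensional simple complex Lie algebra, $\kappa$ is minus its Killing form, $(I_a)$ a basis with $\kappa$-dual basis $(I^a)$, $C_{12}=I_a\otimes I^a$. $\mathfrak g_0$ is a real form, the fixed points of an antilinear involutive automorphism $\tau$. $\mathbb D$ is $\mathbb R$ or the circle, with coordinate $x$; $\delta_{xy}=\delta(x-y)$, $\delta'_{xy}=\partial_x\delta(x-y)$. A realisation of a local affine Gaudin model consists of: finite sets $\Sigma_r$ (real sites) and $\Sigma_c$ (complex sites), for each complex site $\alpha$ a conjugate site $\bar\alpha$, and $\Sigma=\Sigma_r\sqcup\Sigma_c\sqcup\bar\Sigma_c$; multiplicities $m_\alpha\ge1$ ($m_{\bar\alpha}=m_\alpha$); levels $\ell^\alpha_{[p]}$, $0\le p\le m_\alpha-1$, real for real sites, complex for complex sites, $\ell^{\bar\alpha}_{[p]}=\overline{\ell^\alpha_{[p]}}$, with $\ell^\alpha_{[m_\alpha-1]}\neq0$; pairwise distinct positions $z_\alpha$, real for real sites, $z_{\bar\alpha}=\overline{z_\alpha}$; a Poisson algebra $\mathcal A$ of local observables of a field theory on $\mathbb D$ containing $\mathfrak g$-valued fields $\mathcal J^\alpha_{[p]}(x)$ with $\{\mathcal J^\alpha_{[p]}{}_1(x),\mathcal J^\beta_{[q]}{}_2(y)\}=\delta_{\alpha\beta}\big([C_{12},\mathcal J^\alpha_{[p+q]}{}_1(x)]\delta_{xy}-\ell^\alpha_{[p+q]}C_{12}\delta'_{xy}\big)$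 if $p+q<m_\alpha$ and $0$ otherwise, and $\tau(\mathcal J^\alpha_{[p]})=\mathcal J^\alpha_{[p]}$ for real $\alpha$, $\tau(\mathcal J^\alpha_{[p]})=\mathcal J^{\bar\alpha}_{[p]}$ for complex $\alpha$. The tensor product $\mathcal A_1\otimes\mathcal A_2$ denotes the Poisson algebra generated by the fields of both algebras, with fields from different factors Poisson commuting. Sums over sites of model $k$ run over all its sites (real, complex and conjugate). *)

theory Defs
  imports "HOL-Analysis.Analysis"
begin

text \<open>Sites are elements of a type 's; the involution sig maps a complex site to its
  conjugate and fixes the real sites (so real sites = fixed points of sig).
  m = multiplicities, l alpha p = level l^alpha_[p], z = positions.\<close>

definition realisation ::
  "'s set \<Rightarrow> ('s \<Rightarrow> 's) \<Rightarrow> ('s \<Rightarrow> nat) \<Rightarrow> ('s \<Rightarrow> nat \<Rightarrow> complex) \<Rightarrow> ('s \<Rightarrow> complex) \<Rightarrow> bool"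
  where "realisation S sig m l z \<longleftrightarrow>
     finite S \<and> inj_on z S \<and>
     (\<forall>\<alpha>\<in>S. sig \<alpha> \<in> S \<and> sig (sig \<alpha>) = \<alpha> \<and> m (sig \<alpha>) = m \<alpha> \<and> 1 \<le> m \<alpha> \<and>
        (\<forall>p<m \<alpha>. l (sig \<alpha>) p = cnj (l \<alpha> p)) \<and>
        z (sig \<alpha>) = cnj (z \<alpha>) \<and>
        l \<alpha> (m \<alpha> - 1) \<noteq> 0)"

definition total_mult :: "'s set \<Rightarrow> ('s \<Rightarrow> nat) \<Rightarrow> nat"
  where "total_mult S m = (\<Sum>\<alpha>\<in>S. m \<alpha>)"

definition twist ::
  "'s set \<Rightarrow> ('s \<Rightarrow> nat) \<Rightarrow> ('s \<Rightarrow> nat \<Rightarrow> complex) \<Rightarrow> ('s \<Rightarrow> complex) \<Rightarrow> real \<Rightarrow> complex \<Rightarrow> complex"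
  where "twist S m l z linf w =
     (\<Sum>\<alpha>\<in>S. \<Sum>p<m \<alpha>. l \<alpha> p / (w - z \<alpha>) ^ (p + 1)) - complex_of_real linf"

definition twist_zeros ::
  "'s set \<Rightarrow> ('s \<Rightarrow> nat) \<Rightarrow> ('s \<Rightarrow> nat \<Rightarrow> complex) \<Rightarrow> ('s \<Rightarrow> complex) \<Rightarrow> real \<Rightarrow> complex set"
  where "twist_zeros S m l z linf = {w. w \<notin> z ` S \<and> twist S m l z linf w = 0}"

text \<open>The observable  int_D dx kappa(Gamma(w,x), Gamma(w,x)),  where
  Gamma(w,x) = sum_alpha sum_p J^alpha_[p](x)/(w - z_alpha)^(p+1).  By bilinearity of kappa
  and linearity of the integral it equals
  sum  K alpha p beta q / ((w-z_alpha)^(p+1) (w-z_beta)^(q+1)),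
  where K alpha p beta q c is the value, at the phase-space point c, of the local
  observable  int_D dx kappa(J^alpha_[p](x), J^beta_[q](x)).\<close>
definition quad_charge ::
  "'s set \<Rightarrow> ('s \<Rightarrow> nat) \<Rightarrow> ('s \<Rightarrow> complex) \<Rightarrow> ('s \<Rightarrow> nat \<Rightarrow> 's \<Rightarrow> nat \<Rightarrow> 'c \<Rightarrow> complex)
    \<Rightarrow> complex \<Rightarrow> 'c \<Rightarrow> complex"
  where "quad_charge S m z K w c =
     (\<Sum>\<alpha>\<in>S. \<Sum>p<m \<alpha>. \<Sum>\<beta>\<in>S. \<Sum>q<m \<beta>.
        K \<alpha> p \<beta> q c / ((w - z \<alpha>) ^ (p + 1) * (w - z \<beta>) ^ (q + 1)))"

definition local_charge ::
  "'s set \<Rightarrow> ('s \<Rightarrow> nat) \<Rightarrow> ('s \<Rightarrow> nat \<Rightarrow> complex) \<Rightarrow> ('s \<Rightarrow> complex) \<Rightarrow> real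
    \<Rightarrow> ('s \<Rightarrow> nat \<Rightarrow> 's \<Rightarrow> nat \<Rightarrow> 'c \<Rightarrow> complex) \<Rightarrow> complex \<Rightarrow> 'c \<Rightarrow> complex"
  where "local_charge S m l z linf K \<zeta> c =
     - (1 / (2 * deriv (twist S m l z linf) \<zeta>)) * quad_charge S m z K \<zeta> c"

definition coupled_pos :: "'s set \<Rightarrow> ('s \<Rightarrow> complex) \<Rightarrow> real \<Rightarrow> 's \<Rightarrow> complex"
  where "coupled_pos S1 z \<gamma> \<alpha> = (if \<alpha> \<in> S1 then z \<alpha> else z \<alpha> + complex_of_real (1 / \<gamma>))"

end

theory Submission
  imports Defs "HOL-Complex_Analysis.Complex_Analysis"
begin

text \<open>Each twist function is a quotient \<open>P / Q\<close> with \<open>Q = \<Prod>\<^sub>\<alpha> (w - z\<^sub>\<alpha>)^m\<^sub>\<alpha>\<close> and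
  \<open>P\<close> of degree \<open>M\<close> with leading coefficient \<open>-linf\<close>; hence it has at most \<open>M\<close> zeros, and
  if it has \<open>M\<close> of them they are simple roots of \<open>P\<close>, hence simple zeros.

  As \<open>\<gamma> \<rightarrow> 0\<close> the poles of the other model run off to infinity. On a small circle around a
  zero of \<open>\<phi>\<^sub>1\<close> (or, after translating by \<open>1/\<gamma>\<close>, of \<open>\<phi>\<^sub>2\<close>) the coupled twist function
  is therefore a uniformly small perturbation of \<open>\<phi>\<^sub>1\<close> (resp. \<open>\<phi>\<^sub>2\<close>), and the minimum
  modulus principle yields a coupled zero inside. The \<open>M\<close> discs are eventually disjoint and the
  coupled model has only \<open>M\<close> zeros, so each disc contains exactly one, and it is simple.

  A local charge is a rational expression in the inverse distances \<open>1/(\<zeta> - w\<^sub>\<alpha>)\<close> to the poles.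
  Along a family of coupled zeros these tend to the inverse distances in the uncoupled model the
  zero comes from for its own sites, and to \<open>0\<close> for the sites of the other model, so the coupled
  charges tend to those of the two models.\<close>

section \<open>The twist function as a quotient of polynomials\<close>

definition twist_denom :: "'s set \<Rightarrow> ('s \<Rightarrow> nat) \<Rightarrow> ('s \<Rightarrow> complex) \<Rightarrow> complex poly" where
  "twist_denom S m z = (\<Prod>\<alpha>\<in>S. [:- z \<alpha>, 1:] ^ m \<alpha>)"

definition twist_numer ::
  "'s set \<Rightarrow> ('s \<Rightarrow> nat) \<Rightarrow> ('s \<Rightarrow> nat \<Rightarrow> complex) \<Rightarrow> ('s \<Rightarrow> complex) \<Rightarrow> real \<Rightarrow> complex poly" where
  "twist_numer S m l z linf =
     (\<Sum>\<alpha>\<in>S. \<Sum>p<m \<alpha>. smult (l \<alpha> p) ([:- z \<alpha>, 1:] ^ (m \<alpha> - Suc p) * twist_denom (S - {\<alpha>}) m z))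
     - smult (of_real linf) (twist_denom S m z)"

lemma poly_twist_denom: "poly (twist_denom S m z) w = (\<Prod>\<alpha>\<in>S. (w - z \<alpha>) ^ m \<alpha>)"
  by (simp add: twist_denom_def poly_prod)

lemma poly_twist_denom_nonzero: "finite S \<Longrightarrow> w \<notin> z ` S \<Longrightarrow> poly (twist_denom S m z) w \<noteq> 0"
  by (auto simp: poly_twist_denom)

lemma degree_twist_denom: "finite S \<Longrightarrow> degree (twist_denom S m z) = total_mult S m"
  by (simp add: twist_denom_def total_mult_def degree_prod_sum_eq degree_linear_power)

lemma lead_coeff_twist_denom: "lead_coeff (twist_denom S m z) = 1"
  by (simp add: twist_denom_def lead_coeff_prod lead_coeff_power)

lemma twist_mult_denom:
  assumes "finite S" "w \<notin> z ` S"
  shows "twist S m l z linf w * poly (twist_denom S m z) w = poly (twist_numer S m l z linf) w"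
proof -
  have summand: "l \<alpha> p / (w - z \<alpha>) ^ (p + 1) * poly (twist_denom S m z) w
      = l \<alpha> p * ((w - z \<alpha>) ^ (m \<alpha> - Suc p) * poly (twist_denom (S - {\<alpha>}) m z) w)"
    if "\<alpha> \<in> S" "p < m \<alpha>" for \<alpha> p
  proof -
    have "(w - z \<alpha>) ^ m \<alpha> = (w - z \<alpha>) ^ (p + 1) * (w - z \<alpha>) ^ (m \<alpha> - Suc p)"
      using that by (subst power_add[symmetric]) simp
    moreover have "w - z \<alpha> \<noteq> 0" using assms that by auto
    ultimately show ?thesis
      using that assms by (simp add: poly_twist_denom prod.remove)
  qed
  have "twist S m l z linf w * poly (twist_denom S m z) w
      = (\<Sum>\<alpha>\<in>S. \<Sum>p<m \<alpha>. l \<alpha> p / (w - z \<alpha>) ^ (p + 1) * poly (twist_denom S m z) w)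
        - of_real linf * poly (twist_denom S m z) w"
    unfolding twist_def by (simp only: left_diff_distrib sum_distrib_right)
  also have "\<dots> = (\<Sum>\<alpha>\<in>S. \<Sum>p<m \<alpha>. l \<alpha> p * ((w - z \<alpha>) ^ (m \<alpha> - Suc p) * poly (twist_denom (S - {\<alpha>}) m z) w))
        - of_real linf * poly (twist_denom S m z) w"
    by (intro arg_cong2[where f = "(-)"] sum.cong refl summand) auto
  also have "\<dots> = poly (twist_numer S m l z linf) w"
    by (simp add: twist_numer_def poly_sum)
  finally show ?thesis .
qed

lemma twist_numer_top_coeff:
  assumes S: "finite S"
  shows "degree (twist_numer S m l z linf) \<le> total_mult S m"
    and "coeff (twist_numer S m l z linf) (total_mult S m) = - of_real linf"
proof -
  let ?summand = "\<lambda>\<alpha> p. smult (l \<alpha> p) ([:- z \<alpha>, 1:] ^ (m \<alpha> - Suc p) * twist_denom (S - {\<alpha>}) m z)"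
  let ?N = "\<Sum>\<alpha>\<in>S. \<Sum>p<m \<alpha>. ?summand \<alpha> p"
  have summand: "degree (?summand \<alpha> p) < total_mult S m" if "\<alpha> \<in> S" "p < m \<alpha>" for \<alpha> p
  proof -
    have "degree (?summand \<alpha> p) \<le> (m \<alpha> - Suc p) + total_mult (S - {\<alpha>}) m"
      by (rule order_trans[OF degree_smult_le order_trans[OF degree_mult_le]])
         (simp add: degree_linear_power degree_twist_denom S)
    moreover have "total_mult S m = m \<alpha> + total_mult (S - {\<alpha>}) m"
      using that S by (simp add: total_mult_def sum.remove)
    ultimately show ?thesis using that by linarith
  qed
  have numer: "twist_numer S m l z linf = ?N - smult (of_real linf) (twist_denom S m z)"
    by (simp add: twist_numer_def)
  have "degree ?N \<le> total_mult S m"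
    using S by (intro degree_sum_le finite_lessThan less_imp_le summand) simp_all
  then show "degree (twist_numer S m l z linf) \<le> total_mult S m"
    unfolding numer using degree_twist_denom[OF S]
    by (intro degree_diff_le order_trans[OF degree_smult_le]) auto
  have "coeff ?N (total_mult S m) = 0"
    unfolding coeff_sum by (intro sum.neutral ballI coeff_eq_0 summand) auto
  then show "coeff (twist_numer S m l z linf) (total_mult S m) = - of_real linf"
    using lead_coeff_twist_denom[of S m z] by (simp add: numer degree_twist_denom[OF S])
qed

lemma twist_numer_nonzero: "finite S \<Longrightarrow> linf \<noteq> 0 \<Longrightarrow> twist_numer S m l z linf \<noteq> 0"
  using twist_numer_top_coeff(2)[of S m l z linf] by auto

lemma degree_twist_numer: "finite S \<Longrightarrow> linf \<noteq> 0 \<Longrightarrow> degree (twist_numer S m l z linf) = total_mult S m"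
  using twist_numer_top_coeff[of S m l z linf] by (metis antisym le_degree neg_equal_0_iff_equal of_real_eq_0_iff)

lemma twist_zeros_subset_roots:
  "finite S \<Longrightarrow> twist_zeros S m l z linf \<subseteq> {w. poly (twist_numer S m l z linf) w = 0}"
  by (auto simp: twist_zeros_def simp flip: twist_mult_denom)

lemma finite_twist_zeros: "finite S \<Longrightarrow> linf \<noteq> 0 \<Longrightarrow> finite (twist_zeros S m l z linf)"
  by (rule finite_subset[OF twist_zeros_subset_roots poly_roots_finite[OF twist_numer_nonzero]])

lemma card_twist_zeros_le_roots:
  "finite S \<Longrightarrow> linf \<noteq> 0 \<Longrightarrow>
    card (twist_zeros S m l z linf) \<le> card {w. poly (twist_numer S m l z linf) w = 0}"
  by (intro card_mono poly_roots_finite twist_numer_nonzero twist_zeros_subset_roots)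

lemma card_twist_zeros_le:
  assumes "finite S" "linf \<noteq> 0"
  shows "card (twist_zeros S m l z linf) \<le> total_mult S m"
  using card_twist_zeros_le_roots[OF assms, of m l z]
    card_poly_roots_bound[OF twist_numer_nonzero[OF assms, of m l z]]
  by (simp add: degree_twist_numer[OF assms])

lemma card_poly_roots_less_degree_if_double_root:
  fixes p :: "'a::idom poly"
  assumes "p \<noteq> 0" "poly p a = 0" "poly (pderiv p) a = 0"
  shows "card {x. poly p x = 0} < degree p"
proof -
  obtain q where q: "p = [:- a, 1:] * q"
    using assms(2) by (metis dvdE poly_eq_0_iff_dvd)
  have "poly q a = 0"
    using assms(3) unfolding q pderiv_mult by (simp add: pderiv_pCons)
  then obtain r where r: "q = [:- a, 1:] * r"
    by (metis dvdE poly_eq_0_iff_dvd)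
  have p: "p = [:- a, 1:] ^ 2 * r"
    by (simp only: q r power2_eq_square mult.assoc)
  have "r \<noteq> 0"
    using assms(1) p by auto
  then have deg: "degree p = degree r + 2"
    unfolding p by (subst degree_mult_eq) (simp_all add: degree_linear_power)
  have "card {x. poly p x = 0} \<le> card (insert a {x. poly r x = 0})"
    using poly_roots_finite[OF \<open>r \<noteq> 0\<close>] by (intro card_mono) (auto simp: q r)
  also have "\<dots> \<le> Suc (card {x. poly r x = 0})"
    using poly_roots_finite[OF \<open>r \<noteq> 0\<close>] by (simp add: card_insert_if)
  also have "\<dots> \<le> Suc (degree r)"
    using card_poly_roots_bound[OF \<open>r \<noteq> 0\<close>] by simp
  finally show ?thesis using deg by simp
qed

lemma deriv_twist_at_zero:
  assumes S: "finite S" and \<zeta>: "\<zeta> \<in> twist_zeros S m l z linf"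
  shows "deriv (twist S m l z linf) \<zeta> * poly (twist_denom S m z) \<zeta> = poly (pderiv (twist_numer S m l z linf)) \<zeta>"
proof -
  let ?P = "twist_numer S m l z linf" and ?Q = "twist_denom S m z"
  have pole_free: "\<zeta> \<in> - z ` S" "open (- z ` S)"
    using \<zeta> S by (auto simp: twist_zeros_def finite_imp_closed)
  have Q: "poly ?Q \<zeta> \<noteq> 0"
    using pole_free S by (simp add: poly_twist_denom_nonzero)
  have "((\<lambda>w. poly ?P w / poly ?Q w) has_field_derivative
      (poly (pderiv ?P) \<zeta> * poly ?Q \<zeta> - poly ?P \<zeta> * poly (pderiv ?Q) \<zeta>) / (poly ?Q \<zeta> * poly ?Q \<zeta>)) (at \<zeta>)"
    by (rule DERIV_divide[OF poly_DERIV poly_DERIV Q])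
  then have "(twist S m l z linf has_field_derivative
      (poly (pderiv ?P) \<zeta> * poly ?Q \<zeta> - poly ?P \<zeta> * poly (pderiv ?Q) \<zeta>) / (poly ?Q \<zeta> * poly ?Q \<zeta>)) (at \<zeta>)"
    by (rule has_field_derivative_transform_within_open[OF _ pole_free(2,1)])
       (use S in \<open>auto simp: poly_twist_denom_nonzero simp flip: twist_mult_denom\<close>)
  moreover have "poly ?P \<zeta> = 0"
    using \<zeta> S by (auto simp: twist_zeros_def simp flip: twist_mult_denom)
  ultimately show ?thesis
    using Q by (simp add: DERIV_imp_deriv)
qed

lemma twist_zeros_simple:
  assumes S: "finite S" and linf: "linf \<noteq> 0" and \<zeta>: "\<zeta> \<in> twist_zeros S m l z linf"
    and card: "total_mult S m \<le> card (twist_zeros S m l z linf)"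
  shows "deriv (twist S m l z linf) \<zeta> \<noteq> 0"
proof
  assume "deriv (twist S m l z linf) \<zeta> = 0"
  then have "poly (pderiv (twist_numer S m l z linf)) \<zeta> = 0"
    using deriv_twist_at_zero[OF S \<zeta>] by simp
  moreover have "poly (twist_numer S m l z linf) \<zeta> = 0"
    using twist_zeros_subset_roots[OF S, of m l z linf] \<zeta> by auto
  ultimately have "card {w. poly (twist_numer S m l z linf) w = 0} < total_mult S m"
    using card_poly_roots_less_degree_if_double_root[OF twist_numer_nonzero[OF S linf]]
    by (simp add: degree_twist_numer[OF S linf])
  then show False
    using card_twist_zeros_le_roots[OF S linf, of m l z] card by linarith
qed

definition twist_deriv :: "'s set \<Rightarrow> ('s \<Rightarrow> nat) \<Rightarrow> ('s \<Rightarrow> nat \<Rightarrow> complex) \<Rightarrow> ('s \<Rightarrow> complex) \<Rightarrow> complex \<Rightarrow> complex" where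
  "twist_deriv S m l z w = (\<Sum>\<alpha>\<in>S. \<Sum>p<m \<alpha>. - of_nat (Suc p) * l \<alpha> p * inverse (w - z \<alpha>) ^ (p + 2))"

lemma has_field_derivative_pole_term:
  fixes a c w :: complex
  assumes "w \<noteq> a"
  shows "((\<lambda>w. c / (w - a) ^ (p + 1)) has_field_derivative - of_nat (Suc p) * c * inverse (w - a) ^ (p + 2)) (at w)"
proof -
  have "((\<lambda>w. inverse (w - a) ^ Suc p * c) has_field_derivative
      of_nat (Suc p) * (- ((1 - 0) * inverse ((w - a) ^ Suc (Suc 0))) * inverse (w - a) ^ (Suc p - Suc 0)) * c) (at w)"
    using assms by (intro DERIV_cmult_right DERIV_power DERIV_inverse_fun DERIV_diff DERIV_ident DERIV_const) auto
  moreover have "(\<lambda>w. inverse (w - a) ^ Suc p * c) = (\<lambda>w. c / (w - a) ^ (p + 1))"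
    by (simp add: fun_eq_iff divide_inverse power_inverse)
  moreover have "of_nat (Suc p) * (- ((1 - 0) * inverse ((w - a) ^ Suc (Suc 0))) * inverse (w - a) ^ (Suc p - Suc 0)) * c
      = - of_nat (Suc p) * c * inverse (w - a) ^ (p + 2)"
    unfolding power_inverse[symmetric] by (simp add: power_add algebra_simps)
  ultimately show ?thesis by simp
qed

lemma deriv_twist:
  assumes "finite S" "w \<notin> z ` S"
  shows "deriv (twist S m l z linf) w = twist_deriv S m l z w"
proof -
  have "(twist S m l z linf has_field_derivative twist_deriv S m l z w - 0) (at w)"
    unfolding twist_def[abs_def] twist_deriv_def
    using assms by (intro DERIV_diff DERIV_sum DERIV_const has_field_derivative_pole_term) auto
  then show ?thesis by (simp add: DERIV_imp_deriv)
qed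

lemma twist_holomorphic: "finite S \<Longrightarrow> A \<inter> z ` S = {} \<Longrightarrow> twist S m l z linf holomorphic_on A"
  unfolding twist_def[abs_def] by (intro holomorphic_intros) auto

lemma twist_cong: "(\<And>\<alpha>. \<alpha> \<in> S \<Longrightarrow> z \<alpha> = z' \<alpha>) \<Longrightarrow> twist S m l z linf = twist S m l z' linf"
  unfolding twist_def[abs_def] by (intro ext arg_cong2[where f = "(-)"] sum.cong) auto

lemma twist_split_submodel:
  assumes U: "finite U" and T: "T \<subseteq> U" and on_T: "\<And>\<alpha>. \<alpha> \<in> T \<Longrightarrow> p \<alpha> = z \<alpha>"
  shows "twist U m l p linf w = twist T m l z linf w + (twist (U - T) m l p linf w + of_real linf)"
proof -
  have "finite T"
    using finite_subset[OF T U] .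
  have "twist U m l p linf w = twist (T \<union> (U - T)) m l p linf w"
    using T by (simp add: Un_absorb1)
  also have "\<dots> = twist T m l p linf w + (twist (U - T) m l p linf w + of_real linf)"
    unfolding twist_def sum.union_disjoint[OF \<open>finite T\<close> finite_Diff[OF U] Diff_disjoint] by simp
  finally show ?thesis
    using twist_cong[of T p z, OF on_T] by simp
qed

lemma twist_translate: "twist S m l (\<lambda>\<alpha>. z \<alpha> + s) linf w = twist S m l z linf (w - s)"
  unfolding twist_def by (simp add: algebra_simps)

lemma twist_zeros_translate:
  "w \<in> twist_zeros S m l (\<lambda>\<alpha>. z \<alpha> + s) linf \<longleftrightarrow> w - s \<in> twist_zeros S m l z linf"
  by (simp add: twist_zeros_def twist_translate image_def diff_eq_eq)

lemma twist_zeros_translate_meet_ball: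
  assumes "twist_zeros S m l z linf \<inter> ball a r \<noteq> {}"
  shows "twist_zeros S m l (\<lambda>\<alpha>. z \<alpha> + s) linf \<inter> ball (a + s) r \<noteq> {}"
proof -
  obtain u where "u \<in> twist_zeros S m l z linf" "u \<in> ball a r"
    using assms by blast
  then have "u + s \<in> twist_zeros S m l (\<lambda>\<alpha>. z \<alpha> + s) linf" "u + s \<in> ball (a + s) r"
    by (simp_all add: twist_zeros_translate dist_norm)
  then show ?thesis
    by blast
qed

lemma deriv_twist_translate:
  "deriv (twist S m l (\<lambda>\<alpha>. z \<alpha> + s) linf) w = deriv (twist S m l z linf) (w - s)"
  unfolding twist_translate[abs_def] by (subst (1 2) deriv_shift_0) (simp add: o_def algebra_simps)

lemma quad_charge_translate: "quad_charge S m (\<lambda>\<alpha>. z \<alpha> + s) K w c = quad_charge S m z K (w - s) c"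
  by (simp add: quad_charge_def diff_diff_eq add.commute)

lemma local_charge_translate:
  "local_charge S m l (\<lambda>\<alpha>. z \<alpha> + s) linf K w c = local_charge S m l z linf K (w - s) c"
  by (simp add: local_charge_def quad_charge_translate deriv_twist_translate)

section \<open>Persistence of zeros when poles move to infinity\<close>

lemma minimum_modulus_zero:
  fixes f :: "complex \<Rightarrow> complex"
  assumes r: "0 < r" and hol: "f holomorphic_on ball a r" and cont: "continuous_on (cball a r) f"
    and centre: "norm (f a) < e" and sphere: "\<And>w. w \<in> sphere a r \<Longrightarrow> e \<le> norm (f w)"
  shows "\<exists>w\<in>ball a r. f w = 0"
proof (rule ccontr)
  assume "\<not> ?thesis"
  then have nonzero_ball: "\<And>w. w \<in> ball a r \<Longrightarrow> f w \<noteq> 0" by auto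
  have e: "0 < e" using centre norm_ge_zero[of "f a"] by linarith
  then have nonzero: "\<And>w. w \<in> cball a r \<Longrightarrow> f w \<noteq> 0"
    using nonzero_ball sphere by (fastforce simp: less_le)
  have "norm (inverse (f a)) \<le> inverse e"
  proof (rule maximum_modulus_frontier[where S = "ball a r" and f = "\<lambda>w. inverse (f w)"])
    show "(\<lambda>w. inverse (f w)) holomorphic_on interior (ball a r)"
      using hol nonzero_ball by (auto intro!: holomorphic_intros)
    show "continuous_on (closure (ball a r)) (\<lambda>w. inverse (f w))"
      using cont nonzero r by (auto intro!: continuous_intros simp: closure_ball)
    fix w assume "w \<in> frontier (ball a r)"
    then show "norm (inverse (f w)) \<le> inverse e"
      using sphere[of w] e r by (simp add: frontier_ball norm_inverse le_imp_inverse_le)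
  qed (use r in auto)
  moreover have "inverse e < norm (inverse (f a))"
    using centre nonzero_ball[of a] r e by (simp add: norm_inverse less_imp_inverse_less)
  ultimately show False by simp
qed

lemma holomorphic_perturbation_has_zero:
  fixes f :: "complex \<Rightarrow> complex"
  assumes r: "0 < r" and hol: "f holomorphic_on cball a r" and centre: "f a = 0"
    and sphere: "\<And>w. w \<in> sphere a r \<Longrightarrow> f w \<noteq> 0"
  obtains \<epsilon> where "0 < \<epsilon>"
    "\<And>g. g holomorphic_on cball a r \<Longrightarrow> (\<And>w. w \<in> cball a r \<Longrightarrow> norm (g w) < \<epsilon>) \<Longrightarrow> \<exists>u\<in>ball a r. f u + g u = 0"
proof -
  have "continuous_on (sphere a r) (\<lambda>w. norm (f w))"
    using holomorphic_on_imp_continuous_on[OF hol] by (auto intro!: continuous_intros intro: continuous_on_subset)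
  moreover have "sphere a r \<noteq> {}"
    using r by simp
  ultimately obtain w0 where w0: "w0 \<in> sphere a r" "\<And>w. w \<in> sphere a r \<Longrightarrow> norm (f w0) \<le> norm (f w)"
    using continuous_attains_inf[OF compact_sphere] by blast
  define \<epsilon> where "\<epsilon> = norm (f w0) / 2"
  have "0 < \<epsilon>" using sphere[OF w0(1)] by (simp add: \<epsilon>_def)
  then show thesis
  proof (rule that)
    fix g assume g: "g holomorphic_on cball a r" and small: "\<And>w. w \<in> cball a r \<Longrightarrow> norm (g w) < \<epsilon>"
    show "\<exists>u\<in>ball a r. f u + g u = 0"
    proof (rule minimum_modulus_zero[OF r])
      show "(\<lambda>u. f u + g u) holomorphic_on ball a r"
        using holomorphic_on_subset[OF hol ball_subset_cball] holomorphic_on_subset[OF g ball_subset_cball]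
        by (rule holomorphic_on_add)
      show "continuous_on (cball a r) (\<lambda>u. f u + g u)"
        using hol g by (intro continuous_intros holomorphic_on_imp_continuous_on)
      show "norm (f a + g a) < \<epsilon>" using small[of a] r centre by simp
      fix w assume "w \<in> sphere a r"
      then show "\<epsilon> \<le> norm (f w + g w)"
        using w0(2)[of w] small[of w] norm_diff_ineq[of "f w" "g w"] by (simp add: \<epsilon>_def)
    qed
  qed
qed

lemma norm_twist_add_linf_le:
  assumes "finite S" "0 < e"
  obtains R where "0 < R"
    "\<And>z w. (\<And>\<alpha>. \<alpha> \<in> S \<Longrightarrow> R \<le> norm (w - z \<alpha>)) \<Longrightarrow> norm (twist S m l z linf w + of_real linf) \<le> e"
proof -
  define L where "L = (\<Sum>\<alpha>\<in>S. \<Sum>p<m \<alpha>. norm (l \<alpha> p))"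
  define R where "R = max 1 (L / e)"
  have R: "1 \<le> R" "L \<le> e * R"
  proof -
    show "1 \<le> R" by (simp add: R_def)
    have "L / e \<le> R" by (simp add: R_def)
    then show "L \<le> e * R" using \<open>0 < e\<close> by (simp add: divide_le_eq mult.commute)
  qed
  have "norm (twist S m l z linf w + of_real linf) \<le> e" if far: "\<And>\<alpha>. \<alpha> \<in> S \<Longrightarrow> R \<le> norm (w - z \<alpha>)" for z w
  proof -
    have summand: "norm (l \<alpha> p / (w - z \<alpha>) ^ (p + 1)) \<le> norm (l \<alpha> p) / R" if "\<alpha> \<in> S" for \<alpha> p
    proof -
      have "R \<le> norm (w - z \<alpha>) ^ 1" using far[OF that] by simp
      also have "\<dots> \<le> norm (w - z \<alpha>) ^ (p + 1)"
        using far[OF that] R by (intro power_increasing) auto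
      finally have "R \<le> norm (w - z \<alpha>) ^ (p + 1)" .
      then show ?thesis
        using R(1) unfolding norm_divide norm_power by (intro divide_left_mono) auto
    qed
    have "norm (twist S m l z linf w + of_real linf) \<le> (\<Sum>\<alpha>\<in>S. \<Sum>p<m \<alpha>. norm (l \<alpha> p / (w - z \<alpha>) ^ (p + 1)))"
      unfolding twist_def by (simp add: order_trans[OF norm_sum sum_mono[OF norm_sum]])
    also have "\<dots> \<le> L / R"
      unfolding L_def sum_divide_distrib by (intro sum_mono summand)
    also have "\<dots> \<le> e"
      using R \<open>0 < e\<close> by (simp add: divide_le_eq mult.commute)
    finally show ?thesis .
  qed
  then show thesis using R by (intro that) auto
qed

lemma filterlim_uminus_at_infinity: "filterlim f at_infinity F \<Longrightarrow> filterlim (\<lambda>x. - f x) at_infinity F"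
  by (simp add: filterlim_at_infinity_conv_norm_at_top)

lemma eventually_far_from_cball:
  fixes p :: "'a \<Rightarrow> 's \<Rightarrow> 'b::real_normed_vector"
  assumes "finite A" "\<And>\<alpha>. \<alpha> \<in> A \<Longrightarrow> filterlim (\<lambda>\<gamma>. p \<gamma> \<alpha>) at_infinity F"
  shows "\<forall>\<^sub>F \<gamma> in F. \<forall>\<alpha>\<in>A. \<forall>u\<in>cball a \<rho>. R \<le> norm (u - p \<gamma> \<alpha>)"
proof -
  have "\<forall>\<^sub>F \<gamma> in F. \<forall>\<alpha>\<in>A. R + norm a + \<rho> \<le> norm (p \<gamma> \<alpha>)"
    using assms by (intro eventually_ball_finite ballI)
      (auto simp: filterlim_at_infinity_conv_norm_at_top filterlim_at_top)
  then show ?thesis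
  proof (rule eventually_mono, intro ballI)
    fix \<gamma> \<alpha> u assume far: "\<forall>\<alpha>\<in>A. R + norm a + \<rho> \<le> norm (p \<gamma> \<alpha>)" and "\<alpha> \<in> A" "u \<in> cball a \<rho>"
    then show "R \<le> norm (u - p \<gamma> \<alpha>)"
      using norm_triangle_ineq2[of "p \<gamma> \<alpha>" u] norm_triangle_ineq2[of u a]
      by (auto simp: dist_norm norm_minus_commute)
  qed
qed

lemma twist_zero_isolating_ball:
  assumes S: "finite S" and linf: "linf \<noteq> 0" and a: "a \<in> twist_zeros S m l z linf" and r: "0 < r"
  obtains \<rho> where "0 < \<rho>" "\<rho> \<le> r" "cball a \<rho> \<inter> z ` S = {}"
    "\<And>w. w \<in> sphere a \<rho> \<Longrightarrow> twist S m l z linf w \<noteq> 0"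
proof -
  obtain d where d: "0 < d" "\<And>w. w \<in> twist_zeros S m l z linf \<union> z ` S \<Longrightarrow> w \<noteq> a \<Longrightarrow> d \<le> dist a w"
    using finite_set_avoid[of "twist_zeros S m l z linf \<union> z ` S" a] finite_twist_zeros[OF S linf] S by auto
  define \<rho> where "\<rho> = min r (d / 2)"
  have \<rho>: "0 < \<rho>" "\<rho> \<le> r" "\<rho> < d"
    using r d by (auto simp: \<rho>_def)
  have no_pole: "cball a \<rho> \<inter> z ` S = {}"
  proof -
    have "w \<notin> z ` S" if "w \<in> cball a \<rho>" for w
    proof
      assume "w \<in> z ` S"
      moreover have "a \<notin> z ` S"
        using a by (simp add: twist_zeros_def)
      ultimately have "d \<le> dist a w"
        using d(2) by blast
      then show False
        using that \<rho> by simp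
    qed
    then show ?thesis by blast
  qed
  show thesis
  proof (rule that[OF \<rho>(1,2) no_pole])
    fix w assume w: "w \<in> sphere a \<rho>"
    show "twist S m l z linf w \<noteq> 0"
    proof
      assume "twist S m l z linf w = 0"
      then have "w \<in> twist_zeros S m l z linf"
        using w no_pole by (auto simp: twist_zeros_def)
      then show False using d(2)[of w] w \<rho> by auto
    qed
  qed
qed

lemma eventually_twist_zeros_meet_ball:
  assumes U: "finite U" and T: "T \<subseteq> U" and linf: "linf \<noteq> 0" and a: "a \<in> twist_zeros T m l z linf"
    and on_T: "\<And>\<gamma> \<alpha>. \<alpha> \<in> T \<Longrightarrow> pos \<gamma> \<alpha> = z \<alpha>"
    and off_T: "\<And>\<alpha>. \<alpha> \<in> U - T \<Longrightarrow> filterlim (\<lambda>\<gamma>. pos \<gamma> \<alpha>) at_infinity F"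
    and r: "0 < r"
  shows "\<forall>\<^sub>F \<gamma> in F. twist_zeros U m l (pos \<gamma>) linf \<inter> ball a r \<noteq> {}"
proof -
  have finT: "finite T" using finite_subset[OF T U] .
  obtain \<rho> where \<rho>: "0 < \<rho>" "\<rho> \<le> r" and no_pole: "cball a \<rho> \<inter> z ` T = {}"
    and sphere: "\<And>w. w \<in> sphere a \<rho> \<Longrightarrow> twist T m l z linf w \<noteq> 0"
    using twist_zero_isolating_ball[OF finT linf a r] by blast
  have "twist T m l z linf a = 0" using a by (simp add: twist_zeros_def)
  then obtain \<epsilon> where \<epsilon>: "0 < \<epsilon>" and perturb: "\<And>g. g holomorphic_on cball a \<rho> \<Longrightarrow>
      (\<And>w. w \<in> cball a \<rho> \<Longrightarrow> norm (g w) < \<epsilon>) \<Longrightarrow> \<exists>u\<in>ball a \<rho>. twist T m l z linf u + g u = 0"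
    using holomorphic_perturbation_has_zero[OF \<rho>(1) twist_holomorphic[OF finT no_pole]] sphere by metis
  obtain R where R: "0 < R" and small: "\<And>p w. (\<And>\<alpha>. \<alpha> \<in> U - T \<Longrightarrow> R \<le> norm (w - p \<alpha>)) \<Longrightarrow>
      norm (twist (U - T) m l p linf w + of_real linf) \<le> \<epsilon> / 2"
    using norm_twist_add_linf_le[of "U - T" "\<epsilon> / 2" m l linf] U \<epsilon> by auto
  have "\<forall>\<^sub>F \<gamma> in F. \<forall>\<alpha>\<in>U - T. \<forall>u\<in>cball a \<rho>. R \<le> norm (u - pos \<gamma> \<alpha>)"
    using U off_T by (intro eventually_far_from_cball) auto
  then show ?thesis
  proof eventually_elim
    case (elim \<gamma>)
    let ?g = "\<lambda>u. twist (U - T) m l (pos \<gamma>) linf u + of_real linf"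
    have pole_free: "cball a \<rho> \<inter> pos \<gamma> ` U = {}"
    proof (rule equals0I)
      fix u assume "u \<in> cball a \<rho> \<inter> pos \<gamma> ` U"
      then obtain \<alpha> where "\<alpha> \<in> U" "u = pos \<gamma> \<alpha>" "u \<in> cball a \<rho>" by blast
      moreover have "R \<le> norm (u - pos \<gamma> \<alpha>)" if "\<alpha> \<notin> T"
        using elim \<open>\<alpha> \<in> U\<close> \<open>u \<in> cball a \<rho>\<close> that by blast
      ultimately show False
        using no_pole on_T R by (cases "\<alpha> \<in> T") auto
    qed
    then have "?g holomorphic_on cball a \<rho>"
      using U by (intro holomorphic_intros twist_holomorphic) auto
    moreover have "norm (?g w) < \<epsilon>" if "w \<in> cball a \<rho>" for w
      using small[of w "pos \<gamma>"] elim that \<epsilon> by force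
    ultimately obtain u where u: "u \<in> ball a \<rho>" "twist T m l z linf u + ?g u = 0"
      using perturb by blast
    then have "twist U m l (pos \<gamma>) linf u = 0"
      using twist_split_submodel[OF U T on_T] by simp
    moreover have "u \<notin> pos \<gamma> ` U"
      using pole_free mem_ball_imp_mem_cball[OF u(1)] by blast
    ultimately show ?case
      using u(1) \<rho>(2) by (auto simp: twist_zeros_def)
  qed
qed

section \<open>Limits of local charges\<close>

lemma quad_charge_eq_inverse:
  "quad_charge S m z K w c = (\<Sum>\<alpha>\<in>S. \<Sum>p<m \<alpha>. \<Sum>\<beta>\<in>S. \<Sum>q<m \<beta>.
     K \<alpha> p \<beta> q c * inverse (w - z \<alpha>) ^ (p + 1) * inverse (w - z \<beta>) ^ (q + 1))"
  unfolding quad_charge_def by (simp add: divide_inverse power_inverse mult.assoc)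

context
  fixes U T :: "'s set" and z :: "'s \<Rightarrow> complex" and x0 :: complex
    and pos :: "'a \<Rightarrow> 's \<Rightarrow> complex" and w :: "'a \<Rightarrow> complex" and F :: "'a filter"
  assumes U: "finite U" and T: "T \<subseteq> U"
    and tendsto_inverse_gap: "\<And>\<alpha>. \<alpha> \<in> U \<Longrightarrow>
      ((\<lambda>\<gamma>. inverse (w \<gamma> - pos \<gamma> \<alpha>)) \<longlongrightarrow> (if \<alpha> \<in> T then inverse (x0 - z \<alpha>) else 0)) F"
begin

lemma tendsto_quad_charge_submodel:
  "((\<lambda>\<gamma>. quad_charge U m (pos \<gamma>) K (w \<gamma>) c) \<longlongrightarrow> quad_charge T m z K x0 c) F"
proof -
  define L where "L \<alpha> = (if \<alpha> \<in> T then inverse (x0 - z \<alpha>) else 0)" for \<alpha>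
  have "((\<lambda>\<gamma>. quad_charge U m (pos \<gamma>) K (w \<gamma>) c) \<longlongrightarrow>
      (\<Sum>\<alpha>\<in>U. \<Sum>p<m \<alpha>. \<Sum>\<beta>\<in>U. \<Sum>q<m \<beta>. K \<alpha> p \<beta> q c * L \<alpha> ^ (p + 1) * L \<beta> ^ (q + 1))) F"
    unfolding quad_charge_eq_inverse L_def by (intro tendsto_intros tendsto_inverse_gap)
  also have "(\<Sum>\<alpha>\<in>U. \<Sum>p<m \<alpha>. \<Sum>\<beta>\<in>U. \<Sum>q<m \<beta>. K \<alpha> p \<beta> q c * L \<alpha> ^ (p + 1) * L \<beta> ^ (q + 1))
      = (\<Sum>\<alpha>\<in>T. \<Sum>p<m \<alpha>. \<Sum>\<beta>\<in>U. \<Sum>q<m \<beta>. K \<alpha> p \<beta> q c * L \<alpha> ^ (p + 1) * L \<beta> ^ (q + 1))"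
    by (rule sum.mono_neutral_right[OF U T]) (auto simp: L_def)
  also have "\<dots> = (\<Sum>\<alpha>\<in>T. \<Sum>p<m \<alpha>. \<Sum>\<beta>\<in>T. \<Sum>q<m \<beta>. K \<alpha> p \<beta> q c * L \<alpha> ^ (p + 1) * L \<beta> ^ (q + 1))"
    by (intro sum.cong refl sum.mono_neutral_right[OF U T]) (auto simp: L_def)
  also have "\<dots> = quad_charge T m z K x0 c"
    unfolding quad_charge_eq_inverse using T by (intro sum.cong refl) (auto simp: L_def)
  finally show ?thesis .
qed

lemma tendsto_twist_deriv_submodel:
  "((\<lambda>\<gamma>. twist_deriv U m l (pos \<gamma>) (w \<gamma>)) \<longlongrightarrow> twist_deriv T m l z x0) F"
proof -
  define L where "L \<alpha> = (if \<alpha> \<in> T then inverse (x0 - z \<alpha>) else 0)" for \<alpha>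
  have "((\<lambda>\<gamma>. twist_deriv U m l (pos \<gamma>) (w \<gamma>)) \<longlongrightarrow>
      (\<Sum>\<alpha>\<in>U. \<Sum>p<m \<alpha>. - of_nat (Suc p) * l \<alpha> p * L \<alpha> ^ (p + 2))) F"
    unfolding twist_deriv_def L_def by (intro tendsto_intros tendsto_inverse_gap)
  also have "(\<Sum>\<alpha>\<in>U. \<Sum>p<m \<alpha>. - of_nat (Suc p) * l \<alpha> p * L \<alpha> ^ (p + 2)) = twist_deriv T m l z x0"
    unfolding twist_deriv_def using U T
    by (subst sum.mono_neutral_right[of U T]) (auto simp: L_def intro!: sum.cong)
  finally show ?thesis .
qed

end

lemma tendsto_local_charge_submodel:
  assumes U: "finite U" and T: "T \<subseteq> U"
    and on_T: "\<And>\<alpha>. \<alpha> \<in> T \<Longrightarrow> ((\<lambda>\<gamma>. pos \<gamma> \<alpha>) \<longlongrightarrow> z \<alpha>) F"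
    and off_T: "\<And>\<alpha>. \<alpha> \<in> U - T \<Longrightarrow> filterlim (\<lambda>\<gamma>. pos \<gamma> \<alpha>) at_infinity F"
    and w: "(w \<longlongrightarrow> x0) F" and x0: "x0 \<notin> z ` T"
    and simple: "deriv (twist T m l z linf) x0 \<noteq> 0"
    and not_pole: "\<forall>\<^sub>F \<gamma> in F. w \<gamma> \<notin> pos \<gamma> ` U"
  shows "((\<lambda>\<gamma>. local_charge U m l (pos \<gamma>) linf K (w \<gamma>) c) \<longlongrightarrow> local_charge T m l z linf K x0 c) F"
proof -
  have gap: "((\<lambda>\<gamma>. inverse (w \<gamma> - pos \<gamma> \<alpha>)) \<longlongrightarrow> (if \<alpha> \<in> T then inverse (x0 - z \<alpha>) else 0)) F"
    if "\<alpha> \<in> U" for \<alpha>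
  proof (cases "\<alpha> \<in> T")
    case True
    then have "x0 - z \<alpha> \<noteq> 0" using x0 by auto
    then show ?thesis using True by (auto intro!: tendsto_intros w on_T)
  next
    case False
    then have "filterlim (\<lambda>\<gamma>. pos \<gamma> \<alpha>) at_infinity F"
      using off_T that by blast
    then have "filterlim (\<lambda>\<gamma>. w \<gamma> + - pos \<gamma> \<alpha>) at_infinity F"
      by (intro tendsto_add_filterlim_at_infinity[OF w] filterlim_uminus_at_infinity)
    then show ?thesis
      using False by (simp add: filterlim_compose[OF tendsto_inverse_0])
  qed
  have finT: "finite T" using finite_subset[OF T U] .
  have "\<forall>\<^sub>F \<gamma> in F. local_charge U m l (pos \<gamma>) linf K (w \<gamma>) c
      = - (1 / (2 * twist_deriv U m l (pos \<gamma>) (w \<gamma>))) * quad_charge U m (pos \<gamma>) K (w \<gamma>) c"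
    using not_pole by eventually_elim (simp add: local_charge_def deriv_twist U)
  moreover have "((\<lambda>\<gamma>. - (1 / (2 * twist_deriv U m l (pos \<gamma>) (w \<gamma>))) * quad_charge U m (pos \<gamma>) K (w \<gamma>) c)
      \<longlongrightarrow> local_charge T m l z linf K x0 c) F"
    unfolding local_charge_def deriv_twist[OF finT x0]
    using simple deriv_twist[OF finT x0]
    by (intro tendsto_intros tendsto_twist_deriv_submodel tendsto_quad_charge_submodel U T gap) auto
  ultimately show ?thesis
    by (rule tendsto_cong[THEN iffD2])
qed

lemma finite_set_separated:
  fixes A :: "'a::metric_space set"
  assumes "finite A"
  shows "\<exists>d>0. \<forall>x\<in>A. \<forall>y\<in>A. x \<noteq> y \<longrightarrow> d \<le> dist x y"
proof -
  have "\<forall>x\<in>A. \<exists>d>0. \<forall>y\<in>A. y \<noteq> x \<longrightarrow> d \<le> dist x y"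
    using finite_set_avoid[OF assms] by blast
  then obtain \<delta> where \<delta>: "\<And>x. x \<in> A \<Longrightarrow> 0 < \<delta> x" "\<And>x y. x \<in> A \<Longrightarrow> y \<in> A \<Longrightarrow> y \<noteq> x \<Longrightarrow> \<delta> x \<le> dist x y"
    by metis
  define d where "d = Min (insert 1 (\<delta> ` A))"
  have d: "0 < d" "\<And>x. x \<in> A \<Longrightarrow> d \<le> \<delta> x"
    using \<delta>(1) assms by (auto simp: d_def)
  show ?thesis
  proof (intro exI[of _ d] conjI ballI impI)
    fix x y assume "x \<in> A" "y \<in> A" "x \<noteq> y"
    then show "d \<le> dist x y"
      using d(2)[of x] \<delta>(2)[of x y] by simp
  qed (rule d(1))
qed

lemma bij_betw_the_elem_disjoint_balls:
  fixes c :: "'i \<Rightarrow> 'a::metric_space"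
  assumes Z: "finite Z" "card Z \<le> card I"
    and meets: "\<And>i. i \<in> I \<Longrightarrow> Z \<inter> ball (c i) r \<noteq> {}"
    and sep: "\<And>i j. i \<in> I \<Longrightarrow> j \<in> I \<Longrightarrow> i \<noteq> j \<Longrightarrow> 2 * r \<le> dist (c i) (c j)"
  shows "\<And>i. i \<in> I \<Longrightarrow> Z \<inter> ball (c i) r = {the_elem (Z \<inter> ball (c i) r)}"
    and "bij_betw (\<lambda>i. the_elem (Z \<inter> ball (c i) r)) I Z"
proof -
  have same: "i = j" if "i \<in> I" "j \<in> I" "w \<in> ball (c i) r" "w \<in> ball (c j) r" for i j w
  proof (rule ccontr)
    assume "i \<noteq> j"
    moreover have "dist (c i) (c j) \<le> dist (c i) w + dist (c j) w"
      using dist_triangle3[of "c i" "c j" w] by (simp add: dist_commute)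
    ultimately show False
      using sep[OF that(1,2)] that(3,4) by (simp add: dist_commute)
  qed
  define g where "g i = (SOME w. w \<in> Z \<inter> ball (c i) r)" for i
  have g: "g i \<in> Z \<inter> ball (c i) r" if i: "i \<in> I" for i
  proof -
    obtain w where "w \<in> Z \<inter> ball (c i) r"
      using meets[OF i] by blast
    then show ?thesis
      unfolding g_def by (rule someI)
  qed
  have inj: "inj_on g I"
  proof (rule inj_onI)
    fix i j assume "i \<in> I" "j \<in> I" "g i = g j"
    then show "i = j"
      using g[of i] g[of j] same[of i j "g i"] by auto
  qed
  have "g ` I \<subseteq> Z"
    using g by blast
  moreover have "card (g ` I) = card Z"
    using card_mono[OF Z(1) \<open>g ` I \<subseteq> Z\<close>] card_image[OF inj] Z(2) by linarith
  ultimately have onto: "g ` I = Z"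
    using card_subset_eq[OF Z(1)] by blast
  have single: "Z \<inter> ball (c i) r = {g i}" if "i \<in> I" for i
  proof (intro equalityI subsetI)
    fix w assume w: "w \<in> Z \<inter> ball (c i) r"
    then obtain j where "j \<in> I" "w = g j"
      using onto by blast
    then have "j = i"
      using g[of j] w same[of j i w] that by auto
    then show "w \<in> {g i}"
      using \<open>w = g j\<close> by simp
  qed (use g that in auto)
  show "Z \<inter> ball (c i) r = {the_elem (Z \<inter> ball (c i) r)}" if "i \<in> I" for i
    using single[OF that] by simp
  have "bij_betw g I Z"
    using inj onto by (simp add: bij_betw_def)
  then show "bij_betw (\<lambda>i. the_elem (Z \<inter> ball (c i) r)) I Z"
    using bij_betw_cong[of I "\<lambda>i. the_elem (Z \<inter> ball (c i) r)" g Z] single by simp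
qed

section \<open>The coupled model\<close>

lemma filterlim_of_real_inverse_at_infinity:
  "filterlim (\<lambda>\<gamma>::real. complex_of_real (1 / \<gamma>)) at_infinity (at 0)"
  using filterlim_at_infinity_imp_norm_at_top[OF filterlim_inverse_at_infinity[where 'a = real]]
  by (simp add: filterlim_at_infinity_conv_norm_at_top norm_divide inverse_eq_divide)

lemma eventually_at_0_real_iff:
  "eventually P (at (0::real)) \<longleftrightarrow> (\<exists>\<delta>>0. \<forall>\<gamma>. \<gamma> \<noteq> 0 \<and> \<bar>\<gamma>\<bar> < \<delta> \<longrightarrow> P \<gamma>)"
  by (simp add: eventually_at)

lemma eventually_dist_add_of_real_inverse_ge:
  "\<forall>\<^sub>F \<gamma> in at (0::real). R \<le> dist a (b + complex_of_real (1 / \<gamma>))"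
proof -
  have "filterlim (\<lambda>\<gamma>. (b - a) + complex_of_real (1 / \<gamma>)) at_infinity (at 0)"
    by (rule tendsto_add_filterlim_at_infinity[OF tendsto_const filterlim_of_real_inverse_at_infinity])
  then have "\<forall>\<^sub>F \<gamma> in at (0::real). R \<le> norm ((b - a) + complex_of_real (1 / \<gamma>))"
    by (simp add: filterlim_at_infinity_conv_norm_at_top filterlim_at_top)
  then show ?thesis
    by (rule eventually_mono) (simp add: dist_norm norm_minus_commute algebra_simps)
qed

locale coupled_gaudin =
  fixes S1 S2 :: "'s set" and m :: "'s \<Rightarrow> nat" and l :: "'s \<Rightarrow> nat \<Rightarrow> complex"
    and z :: "'s \<Rightarrow> complex" and linf :: real and \<zeta>1 \<zeta>2 :: "nat \<Rightarrow> complex"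
  assumes finite_S1: "finite S1" and finite_S2: "finite S2" and disjoint: "S1 \<inter> S2 = {}"
    and linf_nonzero: "linf \<noteq> 0"
    and zeros1: "bij_betw \<zeta>1 {1..total_mult S1 m} (twist_zeros S1 m l z linf)"
    and zeros2: "bij_betw \<zeta>2 {total_mult S1 m<..total_mult S1 m + total_mult S2 m} (twist_zeros S2 m l z linf)"
begin

abbreviation "M1 \<equiv> total_mult S1 m"

abbreviation "M \<equiv> total_mult S1 m + total_mult S2 m"

abbreviation "coupled_zeros \<gamma> \<equiv> twist_zeros (S1 \<union> S2) m l (coupled_pos S1 z \<gamma>) linf"

definition centre :: "real \<Rightarrow> nat \<Rightarrow> complex" where
  "centre \<gamma> i = (if i \<le> M1 then \<zeta>1 i else \<zeta>2 i + complex_of_real (1 / \<gamma>))"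

lemma finite_S1_S2: "finite (S1 \<union> S2)"
  using finite_S1 finite_S2 by simp

lemma total_mult_S1_S2: "total_mult (S1 \<union> S2) m = M"
  using finite_S1 finite_S2 disjoint by (simp add: total_mult_def sum.union_disjoint)

lemma coupled_pos_S1: "\<alpha> \<in> S1 \<Longrightarrow> coupled_pos S1 z \<gamma> \<alpha> = z \<alpha>"
  by (simp add: coupled_pos_def)

lemma coupled_pos_S2: "\<alpha> \<in> S2 \<Longrightarrow> coupled_pos S1 z \<gamma> \<alpha> = z \<alpha> + complex_of_real (1 / \<gamma>)"
  using disjoint by (auto simp: coupled_pos_def)

lemma filterlim_coupled_pos_S2:
  "\<alpha> \<in> S2 \<Longrightarrow> filterlim (\<lambda>\<gamma>. coupled_pos S1 z \<gamma> \<alpha>) at_infinity (at 0)"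
  by (simp only: coupled_pos_S2)
    (rule tendsto_add_filterlim_at_infinity[OF tendsto_const filterlim_of_real_inverse_at_infinity])

lemma filterlim_coupled_pos_S1_shifted:
  "\<alpha> \<in> S1 \<Longrightarrow> filterlim (\<lambda>\<gamma>. coupled_pos S1 z \<gamma> \<alpha> - complex_of_real (1 / \<gamma>)) at_infinity (at 0)"
  by (simp only: coupled_pos_S1 diff_conv_add_uminus)
    (rule tendsto_add_filterlim_at_infinity[OF tendsto_const
        filterlim_uminus_at_infinity[OF filterlim_of_real_inverse_at_infinity]])

lemma zeta1_in_zeros: "i \<in> {1..M1} \<Longrightarrow> \<zeta>1 i \<in> twist_zeros S1 m l z linf"
  by (rule bij_betw_apply[OF zeros1])

lemma zeta2_in_zeros: "i \<in> {M1<..M} \<Longrightarrow> \<zeta>2 i \<in> twist_zeros S2 m l z linf"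
  by (rule bij_betw_apply[OF zeros2])

lemma zeta1_eq_iff: "i \<in> {1..M1} \<Longrightarrow> j \<in> {1..M1} \<Longrightarrow> \<zeta>1 i = \<zeta>1 j \<longleftrightarrow> i = j"
  by (rule inj_on_eq_iff[OF bij_betw_imp_inj_on[OF zeros1]])

lemma zeta2_eq_iff: "i \<in> {M1<..M} \<Longrightarrow> j \<in> {M1<..M} \<Longrightarrow> \<zeta>2 i = \<zeta>2 j \<longleftrightarrow> i = j"
  by (rule inj_on_eq_iff[OF bij_betw_imp_inj_on[OF zeros2]])

lemma deriv_twist1_nonzero: "i \<in> {1..M1} \<Longrightarrow> deriv (twist S1 m l z linf) (\<zeta>1 i) \<noteq> 0"
  using twist_zeros_simple[OF finite_S1 linf_nonzero zeta1_in_zeros] bij_betw_same_card[OF zeros1]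
  by simp

lemma deriv_twist2_nonzero: "i \<in> {M1<..M} \<Longrightarrow> deriv (twist S2 m l z linf) (\<zeta>2 i) \<noteq> 0"
  using twist_zeros_simple[OF finite_S2 linf_nonzero zeta2_in_zeros] bij_betw_same_card[OF zeros2]
  by simp

lemma eventually_zero_near_centre:
  assumes i: "i \<in> {1..M}" and r: "0 < r"
  shows "\<forall>\<^sub>F \<gamma> in at 0. coupled_zeros \<gamma> \<inter> ball (centre \<gamma> i) r \<noteq> {}"
proof (cases "i \<le> M1")
  case True
  have "\<forall>\<^sub>F \<gamma> in at 0. coupled_zeros \<gamma> \<inter> ball (\<zeta>1 i) r \<noteq> {}"
  proof (rule eventually_twist_zeros_meet_ball[OF finite_S1_S2 _ linf_nonzero zeta1_in_zeros _ _ r])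
    show "i \<in> {1..M1}"
      using i True by simp
    show "coupled_pos S1 z \<gamma> \<alpha> = z \<alpha>" if "\<alpha> \<in> S1" for \<gamma> \<alpha>
      using that by (rule coupled_pos_S1)
    show "filterlim (\<lambda>\<gamma>. coupled_pos S1 z \<gamma> \<alpha>) at_infinity (at 0)" if "\<alpha> \<in> S1 \<union> S2 - S1" for \<alpha>
      using that by (intro filterlim_coupled_pos_S2) blast
  qed simp
  then show ?thesis
    using True by (simp add: centre_def)
next
  case False
  let ?pos = "\<lambda>\<gamma> \<alpha>. coupled_pos S1 z \<gamma> \<alpha> - complex_of_real (1 / \<gamma>)"
  have "\<forall>\<^sub>F \<gamma> in at 0. twist_zeros (S1 \<union> S2) m l (?pos \<gamma>) linf \<inter> ball (\<zeta>2 i) r \<noteq> {}"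
  proof (rule eventually_twist_zeros_meet_ball[OF finite_S1_S2 _ linf_nonzero zeta2_in_zeros _ _ r])
    show "i \<in> {M1<..M}"
      using i False by simp
    show "?pos \<gamma> \<alpha> = z \<alpha>" if "\<alpha> \<in> S2" for \<gamma> \<alpha>
      using that by (simp add: coupled_pos_S2)
    show "filterlim (\<lambda>\<gamma>. ?pos \<gamma> \<alpha>) at_infinity (at 0)" if "\<alpha> \<in> S1 \<union> S2 - S2" for \<alpha>
      using that by (intro filterlim_coupled_pos_S1_shifted) blast
  qed simp
  then show ?thesis
  proof (rule eventually_mono)
    fix \<gamma> :: real
    assume "twist_zeros (S1 \<union> S2) m l (?pos \<gamma>) linf \<inter> ball (\<zeta>2 i) r \<noteq> {}"
    then have "twist_zeros (S1 \<union> S2) m l (\<lambda>\<alpha>. ?pos \<gamma> \<alpha> + complex_of_real (1 / \<gamma>)) linf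
        \<inter> ball (\<zeta>2 i + complex_of_real (1 / \<gamma>)) r \<noteq> {}"
      by (rule twist_zeros_translate_meet_ball)
    then show "coupled_zeros \<gamma> \<inter> ball (centre \<gamma> i) r \<noteq> {}"
      using False by (simp add: centre_def)
  qed
qed

lemma eventually_dist_centres_ge:
  assumes sep: "\<forall>x\<in>twist_zeros S1 m l z linf \<union> twist_zeros S2 m l z linf.
      \<forall>y\<in>twist_zeros S1 m l z linf \<union> twist_zeros S2 m l z linf. x \<noteq> y \<longrightarrow> d \<le> dist x y"
    and ij: "i \<in> {1..M}" "j \<in> {1..M}" "i \<noteq> j"
  shows "\<forall>\<^sub>F \<gamma> in at 0. d \<le> dist (centre \<gamma> i) (centre \<gamma> j)"
proof -
  consider "i \<le> M1" "j \<le> M1" | "\<not> i \<le> M1" "\<not> j \<le> M1" | "i \<le> M1" "\<not> j \<le> M1" | "\<not> i \<le> M1" "j \<le> M1"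
    by blast
  then show ?thesis
  proof cases
    case 1
    then have "i \<in> {1..M1}" "j \<in> {1..M1}"
      using ij by auto
    then have "d \<le> dist (\<zeta>1 i) (\<zeta>1 j)"
      using \<open>i \<noteq> j\<close> by (intro sep[rule_format] UnI1 zeta1_in_zeros) (simp_all add: zeta1_eq_iff)
    then show ?thesis
      using 1 by (simp add: centre_def)
  next
    case 2
    then have "i \<in> {M1<..M}" "j \<in> {M1<..M}"
      using ij by auto
    then have "d \<le> dist (\<zeta>2 i) (\<zeta>2 j)"
      using \<open>i \<noteq> j\<close> by (intro sep[rule_format] UnI2 zeta2_in_zeros) (simp_all add: zeta2_eq_iff)
    then show ?thesis
      using 2 by (simp add: centre_def dist_norm)
  next
    case 3
    show ?thesis
      using eventually_dist_add_of_real_inverse_ge[of d "\<zeta>1 i" "\<zeta>2 j"]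
      by (rule eventually_mono) (use 3 in \<open>simp add: centre_def\<close>)
  next
    case 4
    show ?thesis
      using eventually_dist_add_of_real_inverse_ge[of d "\<zeta>1 j" "\<zeta>2 i"]
      by (rule eventually_mono) (use 4 in \<open>simp add: centre_def dist_commute\<close>)
  qed
qed

lemma eventually_centres_separated:
  obtains r where "0 < r"
    "\<forall>\<^sub>F \<gamma> in at 0. \<forall>i\<in>{1..M}. \<forall>j\<in>{1..M}. i \<noteq> j \<longrightarrow> 2 * r \<le> dist (centre \<gamma> i) (centre \<gamma> j)"
proof -
  have "finite (twist_zeros S1 m l z linf \<union> twist_zeros S2 m l z linf)"
    using finite_S1 finite_S2 linf_nonzero by (simp add: finite_twist_zeros)
  then obtain d where d: "0 < d" and sep: "\<forall>x\<in>twist_zeros S1 m l z linf \<union> twist_zeros S2 m l z linf.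
      \<forall>y\<in>twist_zeros S1 m l z linf \<union> twist_zeros S2 m l z linf. x \<noteq> y \<longrightarrow> d \<le> dist x y"
    using finite_set_separated by blast
  have "\<forall>\<^sub>F \<gamma> in at 0. \<forall>i\<in>{1..M}. \<forall>j\<in>{1..M}. i \<noteq> j \<longrightarrow> d \<le> dist (centre \<gamma> i) (centre \<gamma> j)"
  proof (intro eventually_ball_finite finite_atLeastAtMost ballI)
    fix i j assume "i \<in> {1..M}" "j \<in> {1..M}"
    then show "\<forall>\<^sub>F \<gamma> in at 0. i \<noteq> j \<longrightarrow> d \<le> dist (centre \<gamma> i) (centre \<gamma> j)"
      using eventually_dist_centres_ge[OF sep] by (cases "i = j") auto
  qed
  then show thesis
    using d by (intro that[of "d / 2"]) simp_all
qed

lemma eventually_coupled_zeros_in_balls: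
  assumes r: "0 < r"
    and sep: "\<forall>\<^sub>F \<gamma> in at 0. \<forall>i\<in>{1..M}. \<forall>j\<in>{1..M}. i \<noteq> j \<longrightarrow> 2 * r \<le> dist (centre \<gamma> i) (centre \<gamma> j)"
  defines "\<zeta> \<gamma> i \<equiv> the_elem (coupled_zeros \<gamma> \<inter> ball (centre \<gamma> i) r)"
  shows "\<forall>\<^sub>F \<gamma> in at 0. (\<forall>i\<in>{1..M}. coupled_zeros \<gamma> \<inter> ball (centre \<gamma> i) r = {\<zeta> \<gamma> i})
    \<and> bij_betw (\<zeta> \<gamma>) {1..M} (coupled_zeros \<gamma>)
    \<and> (\<forall>i\<in>{1..M}. deriv (twist (S1 \<union> S2) m l (coupled_pos S1 z \<gamma>) linf) (\<zeta> \<gamma> i) \<noteq> 0)"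
proof -
  have "\<forall>\<^sub>F \<gamma> in at 0. \<forall>i\<in>{1..M}. coupled_zeros \<gamma> \<inter> ball (centre \<gamma> i) r \<noteq> {}"
    using r by (intro eventually_ball_finite finite_atLeastAtMost ballI eventually_zero_near_centre)
  with sep show ?thesis
  proof eventually_elim
    case (elim \<gamma>)
    have finite_zeros: "finite (coupled_zeros \<gamma>)"
      by (rule finite_twist_zeros[OF finite_S1_S2 linf_nonzero])
    have card: "card (coupled_zeros \<gamma>) \<le> card {1..M}"
      using card_twist_zeros_le[OF finite_S1_S2 linf_nonzero, of m l "coupled_pos S1 z \<gamma>"]
      by (simp add: total_mult_S1_S2)
    have bij: "bij_betw (\<zeta> \<gamma>) {1..M} (coupled_zeros \<gamma>)"
      unfolding \<zeta>_def using bij_betw_the_elem_disjoint_balls(2)[OF finite_zeros card] elim by blast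
    have "total_mult (S1 \<union> S2) m \<le> card (coupled_zeros \<gamma>)"
      using bij_betw_same_card[OF bij] by (simp add: total_mult_S1_S2)
    then have "deriv (twist (S1 \<union> S2) m l (coupled_pos S1 z \<gamma>) linf) (\<zeta> \<gamma> i) \<noteq> 0" if "i \<in> {1..M}" for i
      using twist_zeros_simple[OF finite_S1_S2 linf_nonzero bij_betw_apply[OF bij that]] by blast
    moreover have "coupled_zeros \<gamma> \<inter> ball (centre \<gamma> i) r = {\<zeta> \<gamma> i}" if "i \<in> {1..M}" for i
      unfolding \<zeta>_def using bij_betw_the_elem_disjoint_balls(1)[OF finite_zeros card] elim that by blast
    ultimately show ?case
      using bij by blast
  qed
qed

lemma tendsto_diff_centre_0:
  assumes r: "0 < r" and i: "i \<in> {1..M}"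
    and single: "\<forall>\<^sub>F \<gamma> in at 0. coupled_zeros \<gamma> \<inter> ball (centre \<gamma> i) r = {\<zeta> \<gamma>}"
  shows "((\<lambda>\<gamma>. \<zeta> \<gamma> - centre \<gamma> i) \<longlongrightarrow> 0) (at 0)"
proof (rule tendstoI)
  fix e :: real assume "0 < e"
  then have "\<forall>\<^sub>F \<gamma> in at 0. coupled_zeros \<gamma> \<inter> ball (centre \<gamma> i) (min e r) \<noteq> {}"
    using r by (intro eventually_zero_near_centre[OF i]) simp
  with single show "\<forall>\<^sub>F \<gamma> in at 0. dist (\<zeta> \<gamma> - centre \<gamma> i) 0 < e"
  proof eventually_elim
    case (elim \<gamma>)
    then obtain w where w: "w \<in> coupled_zeros \<gamma>" "w \<in> ball (centre \<gamma> i) (min e r)"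
      by blast
    then have "w \<in> coupled_zeros \<gamma> \<inter> ball (centre \<gamma> i) r"
      by simp
    then have "w = \<zeta> \<gamma>"
      using elim by blast
    then show ?case
      using w(2) by (simp add: dist_norm norm_minus_commute)
  qed
qed

lemma coupled_zeros_exist:
  "\<exists>\<delta>>0. \<exists>\<zeta>. (\<forall>\<gamma>. \<gamma> \<noteq> 0 \<and> \<bar>\<gamma>\<bar> < \<delta> \<longrightarrow> bij_betw (\<zeta> \<gamma>) {1..M} (coupled_zeros \<gamma>) \<and>
        (\<forall>i\<in>{1..M}. deriv (twist (S1 \<union> S2) m l (coupled_pos S1 z \<gamma>) linf) (\<zeta> \<gamma> i) \<noteq> 0))
     \<and> (\<forall>i\<in>{1..M1}. ((\<lambda>\<gamma>. \<zeta> \<gamma> i) \<longlongrightarrow> \<zeta>1 i) (at 0))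
     \<and> (\<forall>i\<in>{M1<..M}. ((\<lambda>\<gamma>. \<zeta> \<gamma> i - complex_of_real (1 / \<gamma>)) \<longlongrightarrow> \<zeta>2 i) (at 0))"
proof -
  obtain r where r: "0 < r"
    and sep: "\<forall>\<^sub>F \<gamma> in at 0. \<forall>i\<in>{1..M}. \<forall>j\<in>{1..M}. i \<noteq> j \<longrightarrow> 2 * r \<le> dist (centre \<gamma> i) (centre \<gamma> j)"
    by (rule eventually_centres_separated)
  define \<zeta> where "\<zeta> \<gamma> i = the_elem (coupled_zeros \<gamma> \<inter> ball (centre \<gamma> i) r)" for \<gamma> i
  note balls = eventually_coupled_zeros_in_balls[OF r sep, folded \<zeta>_def]
  have near_centre: "((\<lambda>\<gamma>. \<zeta> \<gamma> i - centre \<gamma> i) \<longlongrightarrow> 0) (at 0)" if "i \<in> {1..M}" for i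
    using balls that by (intro tendsto_diff_centre_0[OF r that]) (auto elim!: eventually_mono)
  have "\<forall>\<^sub>F \<gamma> in at 0. bij_betw (\<zeta> \<gamma>) {1..M} (coupled_zeros \<gamma>) \<and>
      (\<forall>i\<in>{1..M}. deriv (twist (S1 \<union> S2) m l (coupled_pos S1 z \<gamma>) linf) (\<zeta> \<gamma> i) \<noteq> 0)"
    using balls by (rule eventually_mono) blast
  then obtain \<delta> where \<delta>: "0 < \<delta>" "\<forall>\<gamma>. \<gamma> \<noteq> 0 \<and> \<bar>\<gamma>\<bar> < \<delta> \<longrightarrow> bij_betw (\<zeta> \<gamma>) {1..M} (coupled_zeros \<gamma>) \<and>
      (\<forall>i\<in>{1..M}. deriv (twist (S1 \<union> S2) m l (coupled_pos S1 z \<gamma>) linf) (\<zeta> \<gamma> i) \<noteq> 0)"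
    unfolding eventually_at_0_real_iff by blast
  show ?thesis
  proof (intro exI[of _ \<delta>] exI[of _ \<zeta>] conjI ballI \<delta>)
    fix i assume "i \<in> {1..M1}"
    then show "((\<lambda>\<gamma>. \<zeta> \<gamma> i) \<longlongrightarrow> \<zeta>1 i) (at 0)"
      using near_centre[of i] by (simp add: centre_def LIM_zero_iff)
  next
    fix i assume "i \<in> {M1<..M}"
    then have "((\<lambda>\<gamma>. (\<zeta> \<gamma> i - complex_of_real (1 / \<gamma>)) - \<zeta>2 i) \<longlongrightarrow> 0) (at 0)"
      using near_centre[of i] by (simp add: centre_def algebra_simps)
    then show "((\<lambda>\<gamma>. \<zeta> \<gamma> i - complex_of_real (1 / \<gamma>)) \<longlongrightarrow> \<zeta>2 i) (at 0)"
      by (rule LIM_zero_cancel)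
  qed
qed

lemma tendsto_coupled_charge_S1:
  assumes i: "i \<in> {1..M1}" and lim: "((\<lambda>\<gamma>. \<xi> \<gamma>) \<longlongrightarrow> \<zeta>1 i) (at 0)"
    and not_pole: "\<forall>\<^sub>F \<gamma> in at 0. \<xi> \<gamma> \<notin> coupled_pos S1 z \<gamma> ` (S1 \<union> S2)"
  shows "((\<lambda>\<gamma>. local_charge (S1 \<union> S2) m l (coupled_pos S1 z \<gamma>) linf K (\<xi> \<gamma>) c)
      \<longlongrightarrow> local_charge S1 m l z linf K (\<zeta>1 i) c) (at 0)"
proof (rule tendsto_local_charge_submodel[OF finite_S1_S2 _ _ _ lim _ deriv_twist1_nonzero[OF i] not_pole])
  show "((\<lambda>\<gamma>. coupled_pos S1 z \<gamma> \<alpha>) \<longlongrightarrow> z \<alpha>) (at 0)" if "\<alpha> \<in> S1" for \<alpha>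
    using that by (simp add: coupled_pos_S1)
  show "filterlim (\<lambda>\<gamma>. coupled_pos S1 z \<gamma> \<alpha>) at_infinity (at 0)" if "\<alpha> \<in> S1 \<union> S2 - S1" for \<alpha>
    using that by (intro filterlim_coupled_pos_S2) blast
  show "\<zeta>1 i \<notin> z ` S1"
    using zeta1_in_zeros[OF i] by (simp add: twist_zeros_def)
qed simp

lemma tendsto_coupled_charge_S2:
  assumes i: "i \<in> {M1<..M}" and lim: "((\<lambda>\<gamma>. \<xi> \<gamma> - complex_of_real (1 / \<gamma>)) \<longlongrightarrow> \<zeta>2 i) (at 0)"
    and not_pole: "\<forall>\<^sub>F \<gamma> in at 0. \<xi> \<gamma> \<notin> coupled_pos S1 z \<gamma> ` (S1 \<union> S2)"
  shows "((\<lambda>\<gamma>. local_charge (S1 \<union> S2) m l (coupled_pos S1 z \<gamma>) linf K (\<xi> \<gamma>) c)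
      \<longlongrightarrow> local_charge S2 m l z linf K (\<zeta>2 i) c) (at 0)"
proof -
  let ?pos = "\<lambda>\<gamma> \<alpha>. coupled_pos S1 z \<gamma> \<alpha> - complex_of_real (1 / \<gamma>)"
  have "((\<lambda>\<gamma>. local_charge (S1 \<union> S2) m l (?pos \<gamma>) linf K (\<xi> \<gamma> - complex_of_real (1 / \<gamma>)) c)
      \<longlongrightarrow> local_charge S2 m l z linf K (\<zeta>2 i) c) (at 0)"
  proof (rule tendsto_local_charge_submodel[OF finite_S1_S2 _ _ _ lim _ deriv_twist2_nonzero[OF i]])
    show "((\<lambda>\<gamma>. ?pos \<gamma> \<alpha>) \<longlongrightarrow> z \<alpha>) (at 0)" if "\<alpha> \<in> S2" for \<alpha>
      using that by (simp add: coupled_pos_S2)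
    show "filterlim (\<lambda>\<gamma>. ?pos \<gamma> \<alpha>) at_infinity (at 0)" if "\<alpha> \<in> S1 \<union> S2 - S2" for \<alpha>
      using that by (intro filterlim_coupled_pos_S1_shifted) blast
    show "\<zeta>2 i \<notin> z ` S2"
      using zeta2_in_zeros[OF i] by (simp add: twist_zeros_def)
    show "\<forall>\<^sub>F \<gamma> in at 0. \<xi> \<gamma> - complex_of_real (1 / \<gamma>) \<notin> ?pos \<gamma> ` (S1 \<union> S2)"
      using not_pole by (auto elim!: eventually_mono)
  qed simp
  moreover have "local_charge (S1 \<union> S2) m l (coupled_pos S1 z \<gamma>) linf K (\<xi> \<gamma>) c
      = local_charge (S1 \<union> S2) m l (?pos \<gamma>) linf K (\<xi> \<gamma> - complex_of_real (1 / \<gamma>)) c" for \<gamma>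
    using local_charge_translate[of "S1 \<union> S2" m l "?pos \<gamma>" "complex_of_real (1 / \<gamma>)" linf K "\<xi> \<gamma>" c]
    by simp
  ultimately show ?thesis
    by simp
qed

lemma tendsto_coupled_charges:
  assumes "0 < \<delta>" and zeros: "\<forall>\<gamma>. \<gamma> \<noteq> 0 \<and> \<bar>\<gamma>\<bar> < \<delta> \<longrightarrow> bij_betw (\<xi> \<gamma>) {1..M} (coupled_zeros \<gamma>)"
    and lim1: "\<forall>i\<in>{1..M1}. ((\<lambda>\<gamma>. \<xi> \<gamma> i) \<longlongrightarrow> \<zeta>1 i) (at 0)"
    and lim2: "\<forall>i\<in>{M1<..M}. ((\<lambda>\<gamma>. \<xi> \<gamma> i - complex_of_real (1 / \<gamma>)) \<longlongrightarrow> \<zeta>2 i) (at 0)"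
  shows "((\<lambda>\<gamma>. \<Sum>i\<in>{1..M}. \<epsilon> i * local_charge (S1 \<union> S2) m l (coupled_pos S1 z \<gamma>) linf K (\<xi> \<gamma> i) c)
      \<longlongrightarrow> (\<Sum>i\<in>{1..M1}. \<epsilon> i * local_charge S1 m l z linf K (\<zeta>1 i) c)
        + (\<Sum>i\<in>{M1<..M}. \<epsilon> i * local_charge S2 m l z linf K (\<zeta>2 i) c)) (at 0)"
proof -
  have "\<forall>\<^sub>F \<gamma> in at 0. bij_betw (\<xi> \<gamma>) {1..M} (coupled_zeros \<gamma>)"
    unfolding eventually_at_0_real_iff using \<open>0 < \<delta>\<close> zeros by blast
  then have not_pole: "\<forall>\<^sub>F \<gamma> in at 0. \<xi> \<gamma> i \<notin> coupled_pos S1 z \<gamma> ` (S1 \<union> S2)" if "i \<in> {1..M}" for i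
  proof (rule eventually_mono)
    fix \<gamma> assume "bij_betw (\<xi> \<gamma>) {1..M} (coupled_zeros \<gamma>)"
    then have "\<xi> \<gamma> i \<in> coupled_zeros \<gamma>"
      using that by (rule bij_betw_apply)
    then show "\<xi> \<gamma> i \<notin> coupled_pos S1 z \<gamma> ` (S1 \<union> S2)"
      by (simp add: twist_zeros_def)
  qed
  have charge1: "((\<lambda>\<gamma>. local_charge (S1 \<union> S2) m l (coupled_pos S1 z \<gamma>) linf K (\<xi> \<gamma> i) c)
      \<longlongrightarrow> local_charge S1 m l z linf K (\<zeta>1 i) c) (at 0)" if "i \<in> {1..M1}" for i
    using that lim1 not_pole[of i] by (intro tendsto_coupled_charge_S1) auto
  have charge2: "((\<lambda>\<gamma>. local_charge (S1 \<union> S2) m l (coupled_pos S1 z \<gamma>) linf K (\<xi> \<gamma> i) c)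
      \<longlongrightarrow> local_charge S2 m l z linf K (\<zeta>2 i) c) (at 0)" if "i \<in> {M1<..M}" for i
    using that lim2 not_pole[of i] by (intro tendsto_coupled_charge_S2) auto
  have "{1..M} = {1..M1} \<union> {M1<..M}" and "{1..M1} \<inter> {M1<..M} = {}"
    by auto
  then have "(\<Sum>i\<in>{1..M}. f i) = (\<Sum>i\<in>{1..M1}. f i) + (\<Sum>i\<in>{M1<..M}. f i)" for f :: "nat \<Rightarrow> complex"
    by (simp add: sum.union_disjoint)
  then show ?thesis
    by (simp only:) (intro tendsto_add tendsto_sum tendsto_mult_left charge1 charge2)
qed

end

theorem theorem2p1:
  fixes S1 S2 :: "'s set"
    and sig :: "'s \<Rightarrow> 's"
    and m :: "'s \<Rightarrow> nat"
    and l :: "'s \<Rightarrow> nat \<Rightarrow> complex"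
    and z :: "'s \<Rightarrow> complex"
    and linf :: real
    and K :: "'s \<Rightarrow> nat \<Rightarrow> 's \<Rightarrow> nat \<Rightarrow> 'c \<Rightarrow> complex"
    and \<zeta>1 \<zeta>2 :: "nat \<Rightarrow> complex"
    and \<epsilon> :: "nat \<Rightarrow> complex"
  defines "M1 \<equiv> total_mult S1 m"
    and "M \<equiv> total_mult S1 m + total_mult S2 m"
  assumes real1: "realisation S1 sig m l z"
    and real2: "realisation S2 sig m l z"
    and disj: "S1 \<inter> S2 = {}"
    and linf: "linf \<noteq> 0"
    and Ksym: "\<And>\<alpha> p \<beta> q c. K \<alpha> p \<beta> q c = K \<beta> q \<alpha> p c"
    and zeros1: "bij_betw \<zeta>1 {1..M1} (twist_zeros S1 m l z linf)"
    and simple1: "\<And>i. i \<in> {1..M1} \<Longrightarrow> deriv (twist S1 m l z linf) (\<zeta>1 i) \<noteq> 0"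
    and zeros2: "bij_betw \<zeta>2 {M1<..M} (twist_zeros S2 m l z linf)"
    and simple2: "\<And>i. i \<in> {M1<..M} \<Longrightarrow> deriv (twist S2 m l z linf) (\<zeta>2 i) \<noteq> 0"
  shows
    "(\<exists>\<delta>>0. \<exists>\<zeta>::real \<Rightarrow> nat \<Rightarrow> complex.
        (\<forall>\<gamma>. \<gamma> \<noteq> 0 \<and> \<bar>\<gamma>\<bar> < \<delta> \<longrightarrow>
           bij_betw (\<zeta> \<gamma>) {1..M} (twist_zeros (S1 \<union> S2) m l (coupled_pos S1 z \<gamma>) linf) \<and>
           (\<forall>i\<in>{1..M}. deriv (twist (S1 \<union> S2) m l (coupled_pos S1 z \<gamma>) linf) (\<zeta> \<gamma> i) \<noteq> 0)) \<and>
        (\<forall>i\<in>{1..M1}. ((\<lambda>\<gamma>. \<zeta> \<gamma> i) \<longlongrightarrow> \<zeta>1 i) (at (0::real))) \<and>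
        (\<forall>i\<in>{M1<..M}. ((\<lambda>\<gamma>. \<zeta> \<gamma> i - complex_of_real (1 / \<gamma>)) \<longlongrightarrow> \<zeta>2 i) (at (0::real))))
   \<and>
    (\<forall>\<delta>>0. \<forall>\<zeta>::real \<Rightarrow> nat \<Rightarrow> complex.
        ((\<forall>\<gamma>. \<gamma> \<noteq> 0 \<and> \<bar>\<gamma>\<bar> < \<delta> \<longrightarrow>
           bij_betw (\<zeta> \<gamma>) {1..M} (twist_zeros (S1 \<union> S2) m l (coupled_pos S1 z \<gamma>) linf)) \<and>
         (\<forall>i\<in>{1..M1}. ((\<lambda>\<gamma>. \<zeta> \<gamma> i) \<longlongrightarrow> \<zeta>1 i) (at (0::real))) \<and>
         (\<forall>i\<in>{M1<..M}. ((\<lambda>\<gamma>. \<zeta> \<gamma> i - complex_of_real (1 / \<gamma>)) \<longlongrightarrow> \<zeta>2 i) (at (0::real))))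
        \<longrightarrow> (\<forall>c. ((\<lambda>\<gamma>. \<Sum>i\<in>{1..M}. \<epsilon> i *
                  local_charge (S1 \<union> S2) m l (coupled_pos S1 z \<gamma>) linf K (\<zeta> \<gamma> i) c)
               \<longlongrightarrow> (\<Sum>i\<in>{1..M1}. \<epsilon> i * local_charge S1 m l z linf K (\<zeta>1 i) c)
                 + (\<Sum>i\<in>{M1<..M}. \<epsilon> i * local_charge S2 m l z linf K (\<zeta>2 i) c))
             (at (0::real))))"
proof -
  interpret coupled_gaudin S1 S2 m l z linf \<zeta>1 \<zeta>2
    using real1 real2 disj linf zeros1 zeros2 by unfold_locales (auto simp: realisation_def M1_def M_def)
  show ?thesis
    unfolding M1_def M_def
    by (intro conjI allI impI coupled_zeros_exist) (blast intro: tendsto_coupled_charges)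
qed

end
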